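(* Let $c=(L,A)$ be a layered architecture configuration. Then semantic dependency is contained in the reflexive-transitive closure of syntactic dependency: for all $l,l'\in L$, if $l\rightsquigarrow_c l'$ then $l\to_c^* l'$.
   Context: Fix a set $\mathtt{SERVICE}$ of services and a set $\mathtt{PORT}$ of ports with $\mathit{type}\colon\mathtt{PORT}\to\mathcal{P}(\mathtt{SERVICE})$ and a partition $\mathtt{PORT}=\mathcal{I}\cup\mathcal{O}$ (disjoint) into input and output ports. For $P\subseteq\mathtt{PORT}$, $\overline{P}=\prod_{p\in P}\mathit{type}(p)$ (valuations of $P$); for a function $g$ and a set $Z$, $g|_Z$ is the restriction of $g$ to $\mathrm{dom}(g)\cap Z$. A layer is $l=(I_l,O_l,f_l)$ with $I_l\subseteq\mathcal{I}$, $O_l\subseteq\mathcal{O}$, $f_l\colon\overline{I_l}\to\mathcal{P}(\overline{O_l})$. A layered architecture configuration is $c=(L,A)$ with $L$ a set of layers and $A$ a partial map from $\bigcup_{l\in L}I_l$ to $\bigcup_{l\in L}O_l$ such that distinct layers share no ports and $\mathit{type}(A(i))\subseteq\mathit{type}(i)$ whenever $A(i)$ is defined. Let $\mathrm{Ports}(c)$, $\mathrm{In}(c)=\bigcup_l I_l$, $\mathrm{Out}(c)=\bigcup_l O_l$ be the sets of all, input, output ports of $c$, and $\mathrm{OpenIn}(c)=\mathrm{In}(c)\setminus\mathrm{dom}(A)$ the open input ports. $\pi_c(p)$ is the unique layer of $L$ owning port $p$. The attachment-closure $O_l^*$ of $l\in L$ is the smallest $P\subseteq\mathrm{Ports}(c)$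 with $O_l\subseteq P$, closed under ($i\in P$, $A(i)=o$ $\Rightarrow$ $o\in P$) and ($o\in\mathrm{Out}(c)\cap P\Rightarrow I_{\pi_c(o)}\subseteq P$). The configuration semantics of $l\in L$ is the map $[\![c]\!]_l\colon\overline{\mathrm{OpenIn}(c)}\to\mathcal{P}(\overline{O_l})$ with $[\![c]\!]_l(\mu)$ the set of all $\nu|_{O_l}$ where $\nu\in\overline{O_l^*}$ satisfies: (a) $\mu|_{O_l^*}=\nu|_{\mathrm{OpenIn}(c)}$; (b) $\nu(i)=\nu(A(i))$ for every input port $i\in O_l^*$ with $A(i)$ defined; (c) for every $o\in\mathrm{Out}(c)\cap O_l^*$, with $r=\pi_c(o)$, there is $\xi\in f_r(\nu|_{I_r})$ with $\xi|_{O_l^*}=\nu|_{O_r}$. For $f\colon\overline{I_l}\to\mathcal{P}(\overline{O_l})$ let $l[f]=(I_l,O_l,f)$ and $c[l:=f]=((L\setminus\{l\})\cup\{l[f]\},A)$. Syntactic dependency: $l\to_c l'$ iff there are $o\in O_l$, $i\in I_{l'}$ with $A(i)=o$; $\to_c^*$ is its reflexive-transitive closure. Semantic dependency $\rightsquigarrow_c\subseteq L\times L$: $l\rightsquigarrow_c l$ iff there is $f\colon\overline{I_l}\to\mathcal{P}(\overline{O_l})$ with $[\![c]\!]_l\neq[\![c[l:=f]]\!]_{l[f]}$; for $l\neq l'$, $l\rightsquigarrow_c l'$ iff there is $f\colon\overline{I_l}\to\mathcal{P}(\overline{O_l})$ with $[\![c]\!]_{l'}\neq[\![c[l:=f]]\!]_{l'}$.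 *)

theory Defs
  imports Main
begin

text \<open>Ports have type 'p (the set PORT), services type 's (the set SERVICE).\<close>

definition vals :: "('p \<Rightarrow> 's set) \<Rightarrow> 'p set \<Rightarrow> ('p \<rightharpoonup> 's) set" where
  "vals tp P = {\<mu>. dom \<mu> = P \<and> (\<forall>p s. \<mu> p = Some s \<longrightarrow> s \<in> tp p)}"

type_synonym ('p, 's) layer = "'p set \<times> 'p set \<times> (('p \<rightharpoonup> 's) \<Rightarrow> ('p \<rightharpoonup> 's) set)"
type_synonym ('p, 's) config = "('p, 's) layer set \<times> ('p \<rightharpoonup> 'p)"

definition lin :: "('p, 's) layer \<Rightarrow> 'p set" where "lin l = fst l"
definition lout :: "('p, 's) layer \<Rightarrow> 'p set" where "lout l = fst (snd l)"
definition lfun :: "('p, 's) layer \<Rightarrow> (('p \<rightharpoonup> 's) \<Rightarrow> ('p \<rightharpoonup> 's) set)" where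
  "lfun l = snd (snd l)"

definition is_lfun :: "('p \<Rightarrow> 's set) \<Rightarrow> 'p set \<Rightarrow> 'p set
    \<Rightarrow> (('p \<rightharpoonup> 's) \<Rightarrow> ('p \<rightharpoonup> 's) set) \<Rightarrow> bool" where
  "is_lfun tp I Op f \<longleftrightarrow> (\<forall>\<mu>. (\<mu> \<in> vals tp I \<longrightarrow> f \<mu> \<subseteq> vals tp Op) \<and> (\<mu> \<notin> vals tp I \<longrightarrow> f \<mu> = {}))"

definition is_layer :: "('p \<Rightarrow> 's set) \<Rightarrow> 'p set \<Rightarrow> 'p set \<Rightarrow> ('p, 's) layer \<Rightarrow> bool" where
  "is_layer tp Inp Outp l \<longleftrightarrow> lin l \<subseteq> Inp \<and> lout l \<subseteq> Outp \<and> is_lfun tp (lin l) (lout l) (lfun l)"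

definition layers :: "('p, 's) config \<Rightarrow> ('p, 's) layer set" where "layers c = fst c"
definition att :: "('p, 's) config \<Rightarrow> ('p \<rightharpoonup> 'p)" where "att c = snd c"

definition InC :: "('p, 's) config \<Rightarrow> 'p set" where "InC c = (\<Union>l\<in>layers c. lin l)"
definition OutC :: "('p, 's) config \<Rightarrow> 'p set" where "OutC c = (\<Union>l\<in>layers c. lout l)"
definition PortsC :: "('p, 's) config \<Rightarrow> 'p set" where "PortsC c = InC c \<union> OutC c"
definition OpenIn :: "('p, 's) config \<Rightarrow> 'p set" where "OpenIn c = InC c - dom (att c)"

definition is_config :: "('p \<Rightarrow> 's set) \<Rightarrow> 'p set \<Rightarrow> 'p set \<Rightarrow> ('p, 's) config \<Rightarrow> bool" where
  "is_config tp Inp Outp c \<longleftrightarrow>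
     (\<forall>l\<in>layers c. is_layer tp Inp Outp l) \<and>
     dom (att c) \<subseteq> InC c \<and> ran (att c) \<subseteq> OutC c \<and>
     (\<forall>l\<in>layers c. \<forall>l'\<in>layers c. l \<noteq> l' \<longrightarrow>
        (lin l \<union> lout l) \<inter> (lin l' \<union> lout l') = {}) \<and>
     (\<forall>i q. att c i = Some q \<longrightarrow> tp q \<subseteq> tp i)"

definition owner :: "('p, 's) config \<Rightarrow> 'p \<Rightarrow> ('p, 's) layer" where
  "owner c p = (THE l. l \<in> layers c \<and> p \<in> lin l \<union> lout l)"

definition att_closed :: "('p, 's) config \<Rightarrow> ('p, 's) layer \<Rightarrow> 'p set \<Rightarrow> bool" where
  "att_closed c l P \<longleftrightarrow> P \<subseteq> PortsC c \<and> lout l \<subseteq> P \<and>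
     (\<forall>i q. i \<in> P \<longrightarrow> att c i = Some q \<longrightarrow> q \<in> P) \<and>
     (\<forall>q \<in> OutC c \<inter> P. lin (owner c q) \<subseteq> P)"

definition att_closure :: "('p, 's) config \<Rightarrow> ('p, 's) layer \<Rightarrow> 'p set" where
  "att_closure c l = \<Inter> {P. att_closed c l P}"

definition sem :: "('p \<Rightarrow> 's set) \<Rightarrow> ('p, 's) config \<Rightarrow> ('p, 's) layer
    \<Rightarrow> ('p \<rightharpoonup> 's) \<Rightarrow> ('p \<rightharpoonup> 's) set" where
  "sem tp c l \<mu> = (if \<mu> \<in> vals tp (OpenIn c) then
     {\<nu> |` lout l | \<nu>. \<nu> \<in> vals tp (att_closure c l) \<and>
        \<mu> |` att_closure c l = \<nu> |` OpenIn c \<and>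
        (\<forall>i \<in> att_closure c l. i \<in> InC c \<longrightarrow> (\<forall>q. att c i = Some q \<longrightarrow> \<nu> i = \<nu> q)) \<and>
        (\<forall>q \<in> OutC c \<inter> att_closure c l.
           \<exists>\<xi> \<in> lfun (owner c q) (\<nu> |` lin (owner c q)).
              \<xi> |` att_closure c l = \<nu> |` lout (owner c q))}
   else {})"

definition lupd :: "('p, 's) layer \<Rightarrow> (('p \<rightharpoonup> 's) \<Rightarrow> ('p \<rightharpoonup> 's) set) \<Rightarrow> ('p, 's) layer" where
  "lupd l f = (lin l, lout l, f)"

definition cupd :: "('p, 's) config \<Rightarrow> ('p, 's) layer \<Rightarrow> (('p \<rightharpoonup> 's) \<Rightarrow> ('p \<rightharpoonup> 's) set)
    \<Rightarrow> ('p, 's) config" where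
  "cupd c l f = ((layers c - {l}) \<union> {lupd l f}, att c)"

definition syn_dep :: "('p, 's) config \<Rightarrow> ('p, 's) layer \<Rightarrow> ('p, 's) layer \<Rightarrow> bool" where
  "syn_dep c l l' \<longleftrightarrow> l \<in> layers c \<and> l' \<in> layers c \<and>
     (\<exists>q \<in> lout l. \<exists>i \<in> lin l'. att c i = Some q)"

definition sem_dep :: "('p \<Rightarrow> 's set) \<Rightarrow> ('p, 's) config \<Rightarrow> ('p, 's) layer \<Rightarrow> ('p, 's) layer \<Rightarrow> bool" where
  "sem_dep tp c l l' \<longleftrightarrow> l \<in> layers c \<and> l' \<in> layers c \<and>
     (if l = l' then
        (\<exists>f. is_lfun tp (lin l) (lout l) f \<and> sem tp c l \<noteq> sem tp (cupd c l f) (lupd l f))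
      else
        (\<exists>f. is_lfun tp (lin l) (lout l) f \<and> sem tp c l' \<noteq> sem tp (cupd c l f) l'))"

end

theory Submission
  imports Defs
begin

text \<open>If l does not reach l' syntactically, the ports of all layers from which l' is reachable
  form an attachment-closed set for l' that avoids the ports of l.  The closure of l' lies
  inside this set, and on it the configuration and its update at l have the same ports,
  attachments and owners; hence they have the same closure of l' and the same semantics.\<close>

abbreviation lports :: "('p, 's) layer \<Rightarrow> 'p set" where
  "lports l \<equiv> lin l \<union> lout l"

lemma att_closed_Int:
  assumes "att_closed c l P" "att_closed c l S"
  shows "att_closed c l (P \<inter> S)"
  using assms unfolding att_closed_def by (simp add: le_infI1) blast

lemma att_closure_subset:
  assumes "att_closed c l S"
  shows "att_closure c l \<subseteq> S"
  using assms unfolding att_closure_def by blast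

lemma att_closure_eq_Inter_subsets:
  assumes "att_closed c l S"
  shows "att_closure c l = \<Inter> {P. att_closed c l P \<and> P \<subseteq> S}"
proof
  show "att_closure c l \<subseteq> \<Inter> {P. att_closed c l P \<and> P \<subseteq> S}"
    unfolding att_closure_def by blast
  show "\<Inter> {P. att_closed c l P \<and> P \<subseteq> S} \<subseteq> att_closure c l"
    unfolding att_closure_def using att_closed_Int[OF _ assms] by blast
qed

lemma config_port_layer_unique:
  assumes "is_config tp Inp Outp c" "m \<in> layers c" "m' \<in> layers c"
    and "q \<in> lports m" "q \<in> lports m'"
  shows "m = m'"
  using assms unfolding is_config_def by blast

lemma owner_eqI:
  assumes "m \<in> layers c" "q \<in> lports m"
    and "\<And>m'. m' \<in> layers c \<Longrightarrow> q \<in> lports m' \<Longrightarrow> m' = m"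
  shows "owner c q = m"
  unfolding owner_def by (rule the_equality) (use assms in blast)+

lemma owner_config:
  assumes "is_config tp Inp Outp c" "m \<in> layers c" "q \<in> lports m"
  shows "owner c q = m"
  using assms by (intro owner_eqI) (auto dest: config_port_layer_unique)

lemma
  assumes "l \<in> layers c"
  shows layers_cupd: "layers (cupd c l f) = insert (lupd l f) (layers c - {l})"
    and att_cupd: "att (cupd c l f) = att c"
    and InC_cupd: "InC (cupd c l f) = InC c"
    and OutC_cupd: "OutC (cupd c l f) = OutC c"
    and PortsC_cupd: "PortsC (cupd c l f) = PortsC c"
    and OpenIn_cupd: "OpenIn (cupd c l f) = OpenIn c"
proof -
  show layers: "layers (cupd c l f) = insert (lupd l f) (layers c - {l})"
    and att: "att (cupd c l f) = att c"
    unfolding cupd_def layers_def att_def by auto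
  have "lin (lupd l f) = lin l" "lout (lupd l f) = lout l"
    unfolding lupd_def lin_def lout_def by auto
  then show InC: "InC (cupd c l f) = InC c" and OutC: "OutC (cupd c l f) = OutC c"
    unfolding InC_def OutC_def layers using assms by auto
  show "PortsC (cupd c l f) = PortsC c"
    unfolding PortsC_def InC OutC ..
  show "OpenIn (cupd c l f) = OpenIn c"
    unfolding OpenIn_def InC att ..
qed

lemma owner_cupd:
  assumes "is_config tp Inp Outp c" "l \<in> layers c"
    and "m \<in> layers c" "m \<noteq> l" "q \<in> lports m"
  shows "owner (cupd c l f) q = owner c q"
proof -
  have "owner (cupd c l f) q = m"
  proof (rule owner_eqI)
    show "m \<in> layers (cupd c l f)"
      using assms(3,4) by (simp add: layers_cupd[OF assms(2)])
    show "q \<in> lports m" by fact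
  next
    fix m' assume m': "m' \<in> layers (cupd c l f)" "q \<in> lports m'"
    have "q \<notin> lports l"
      using config_port_layer_unique[OF assms(1,3,2,5)] assms(4) by blast
    moreover have "lports (lupd l f) = lports l"
      unfolding lupd_def lin_def lout_def by simp
    ultimately have "m' \<in> layers c"
      using m' by (auto simp: layers_cupd[OF assms(2)])
    then show "m' = m"
      using config_port_layer_unique[OF assms(1,3) _ assms(5) m'(2)] by simp
  qed
  then show ?thesis
    using owner_config[OF assms(1,3,5)] by simp
qed

lemma owner_cupd_on_shield:
  assumes "is_config tp Inp Outp c" "l \<in> layers c"
    and "att_closed c l' S" "S \<inter> lports l = {}" "q \<in> S"
  shows "owner (cupd c l f) q = owner c q"
proof -
  have "q \<in> PortsC c"
    using assms(3,5) unfolding att_closed_def by blast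
  then obtain m where "m \<in> layers c" "q \<in> lports m"
    unfolding PortsC_def InC_def OutC_def by blast
  moreover have "m \<noteq> l"
    using assms(4,5) calculation by blast
  ultimately show ?thesis
    using owner_cupd[OF assms(1,2)] by blast
qed

lemma att_closure_cupd:
  assumes "is_config tp Inp Outp c" "l \<in> layers c"
    and "att_closed c l' S" "S \<inter> lports l = {}"
  shows "att_closure (cupd c l f) l' = att_closure c l'"
proof -
  have closed_iff: "att_closed (cupd c l f) l' P \<longleftrightarrow> att_closed c l' P" if "P \<subseteq> S" for P
  proof -
    have "owner (cupd c l f) q = owner c q" if "q \<in> P" for q
      using owner_cupd_on_shield[OF assms] \<open>P \<subseteq> S\<close> that by blast
    then have "(\<forall>q\<in>OutC c \<inter> P. lin (owner (cupd c l f) q) \<subseteq> P)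
        \<longleftrightarrow> (\<forall>q\<in>OutC c \<inter> P. lin (owner c q) \<subseteq> P)"
      by auto
    then show ?thesis
      unfolding att_closed_def PortsC_cupd[OF assms(2)] OutC_cupd[OF assms(2)]
        att_cupd[OF assms(2)] by simp
  qed
  then have "att_closed (cupd c l f) l' S"
    using assms(3) by simp
  moreover have "{P. att_closed (cupd c l f) l' P \<and> P \<subseteq> S} = {P. att_closed c l' P \<and> P \<subseteq> S}"
    using closed_iff by blast
  ultimately show ?thesis
    using att_closure_eq_Inter_subsets[OF assms(3)] att_closure_eq_Inter_subsets by metis
qed

lemma sem_cupd:
  assumes "is_config tp Inp Outp c" "l \<in> layers c"
    and "att_closed c l' S" "S \<inter> lports l = {}"
  shows "sem tp (cupd c l f) l' = sem tp c l'"
proof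
  fix \<mu>
  let ?K = "att_closure c l'"
  have "owner (cupd c l f) q = owner c q" if "q \<in> ?K" for q
    using owner_cupd_on_shield[OF assms] att_closure_subset[OF assms(3)] that by blast
  then have "(\<forall>q \<in> OutC c \<inter> ?K. \<exists>\<xi> \<in> lfun (owner (cupd c l f) q) (\<nu> |` lin (owner (cupd c l f) q)).
                 \<xi> |` ?K = \<nu> |` lout (owner (cupd c l f) q))
        \<longleftrightarrow> (\<forall>q \<in> OutC c \<inter> ?K. \<exists>\<xi> \<in> lfun (owner c q) (\<nu> |` lin (owner c q)).
                 \<xi> |` ?K = \<nu> |` lout (owner c q))" for \<nu>
    by (metis IntD2)
  then show "sem tp (cupd c l f) l' \<mu> = sem tp c l' \<mu>"
    unfolding sem_def att_closure_cupd[OF assms] OpenIn_cupd[OF assms(2)]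
      InC_cupd[OF assms(2)] OutC_cupd[OF assms(2)] att_cupd[OF assms(2)]
    by simp
qed

definition ancestor_ports :: "('p, 's) config \<Rightarrow> ('p, 's) layer \<Rightarrow> 'p set" where
  "ancestor_ports c l' = (\<Union>m\<in>{m \<in> layers c. (syn_dep c)\<^sup>*\<^sup>* m l'}. lports m)"

lemma att_closed_ancestor_ports:
  assumes "is_config tp Inp Outp c" "l' \<in> layers c"
  shows "att_closed c l' (ancestor_ports c l')"
  unfolding att_closed_def
proof (intro conjI allI impI ballI)
  show "ancestor_ports c l' \<subseteq> PortsC c"
    unfolding ancestor_ports_def PortsC_def InC_def OutC_def by blast
  show "lout l' \<subseteq> ancestor_ports c l'"
    unfolding ancestor_ports_def using assms(2) by blast
next
  fix i q assume i: "i \<in> ancestor_ports c l'" and iq: "att c i = Some q"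
  obtain m where m: "m \<in> layers c" "(syn_dep c)\<^sup>*\<^sup>* m l'" "i \<in> lports m"
    using i unfolding ancestor_ports_def by blast
  have "i \<in> InC c" "q \<in> OutC c"
    using assms(1) iq unfolding is_config_def ran_def by blast+
  then obtain mi mq where "mi \<in> layers c" "i \<in> lin mi" "mq \<in> layers c" "q \<in> lout mq"
    unfolding InC_def OutC_def by blast
  moreover have "mi = m"
    using config_port_layer_unique[OF assms(1)] m calculation by blast
  ultimately have "syn_dep c mq m"
    unfolding syn_dep_def using m(1) iq by blast
  then have "(syn_dep c)\<^sup>*\<^sup>* mq l'"
    using m(2) by (rule converse_rtranclp_into_rtranclp)
  then show "q \<in> ancestor_ports c l'"
    unfolding ancestor_ports_def using \<open>mq \<in> layers c\<close> \<open>q \<in> lout mq\<close> by blast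
next
  fix q assume "q \<in> OutC c \<inter> ancestor_ports c l'"
  then obtain m where "m \<in> layers c" "(syn_dep c)\<^sup>*\<^sup>* m l'" "q \<in> lports m"
    unfolding ancestor_ports_def by blast
  moreover from calculation have "owner c q = m"
    by (intro owner_config[OF assms(1)])
  ultimately show "lin (owner c q) \<subseteq> ancestor_ports c l'"
    unfolding ancestor_ports_def by blast
qed

lemma ancestor_ports_disjoint:
  assumes "is_config tp Inp Outp c" "l \<in> layers c" "\<not> (syn_dep c)\<^sup>*\<^sup>* l l'"
  shows "ancestor_ports c l' \<inter> lports l = {}"
proof -
  have "m = l" if "m \<in> layers c" "q \<in> lports m" "q \<in> lports l" for m q
    using config_port_layer_unique[OF assms(1) that(1) assms(2) that(2,3)] .
  then show ?thesis
    using assms(3) unfolding ancestor_ports_def by blast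
qed

theorem mainTheorem4:
  fixes tp :: "'p \<Rightarrow> 's set" and Inp Outp :: "'p set" and c :: "('p, 's) config"
    and l l' :: "('p, 's) layer"
  assumes "Inp \<union> Outp = UNIV" and "Inp \<inter> Outp = {}"
    and "is_config tp Inp Outp c"
    and "l \<in> layers c" and "l' \<in> layers c"
    and "sem_dep tp c l l'"
  shows "(syn_dep c)\<^sup>*\<^sup>* l l'"
proof (cases "l = l'")
  case False
  then obtain f where changed: "sem tp c l' \<noteq> sem tp (cupd c l f) l'"
    using assms(6) unfolding sem_dep_def by auto
  show ?thesis
  proof (rule ccontr)
    assume "\<not> (syn_dep c)\<^sup>*\<^sup>* l l'"
    then have "sem tp (cupd c l f) l' = sem tp c l'"
      using sem_cupd[OF assms(3,4) att_closed_ancestor_ports[OF assms(3,5)]]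
        ancestor_ports_disjoint[OF assms(3,4)] by blast
    with changed show False by simp
  qed
qed simp

end
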